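(* Let $G$ be a finite transitive permutation group on a set $\Omega$ and suppose that $x\in G$ is quasi-semiregular on $\Omega$. If $\Sigma$ is a system of imprimitivity preserved by $G$, then the permutation $x^\Sigma$ induced by $x$ on $\Sigma$ is quasi-semiregular. Equivalently, if $x\in G_\alpha$ is quasi-semiregular on $[G:G_\alpha]$, then for every subgroup $K$ with $G_\alpha\le K\le G$, $x$ is quasi-semiregular on $[G:K]$.
   Context: A permutation $g$ is quasi-semiregular if $\langle g\rangle$ has a unique fixed point and acts semiregularly (only the identity fixes a point) on the remaining points. $[G:K]$ denotes the set of right cosets of $K$ with $G$ acting by right multiplication. *)

theory Defs
  imports "HOL-Algebra.Bij" "HOL-Library.Disjoint_Sets"
begin

text \<open>A permutation f of the set X is quasi-semiregular if the cyclic group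
  generated by f has a unique fixed point w in X, and every nontrivial element
  of that cyclic group fixes no point of X other than w (equivalently: any power
  of f fixing a point y different from w is the identity on X).
  For a permutation of a finite set, the cyclic group generated by f consists of
  the nonnegative powers f^^k, and a point fixed by the whole group is exactly
  a point fixed by f.\<close>

definition quasi_semiregular :: "'a set \<Rightarrow> ('a \<Rightarrow> 'a) \<Rightarrow> bool" where
  "quasi_semiregular X f \<longleftrightarrow>
     bij_betw f X X \<and>
     (\<exists>!w. w \<in> X \<and> f w = w) \<and>
     (\<forall>w\<in>X. f w = w \<longrightarrow>
        (\<forall>y\<in>X - {w}. \<forall>k::nat. (f ^^ k) y = y \<longrightarrow> (\<forall>z\<in>X. (f ^^ k) z = z)))"

definition block_system :: "'a set \<Rightarrow> ('a \<Rightarrow> 'a) set \<Rightarrow> 'a set set \<Rightarrow> bool" where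
  "block_system \<Omega> G \<Sigma> \<longleftrightarrow> partition_on \<Omega> \<Sigma> \<and> (\<forall>g\<in>G. \<forall>B\<in>\<Sigma>. g ` B \<in> \<Sigma>)"

end

(*
  Let w be the unique fixed point of x and B the block containing it; x fixes B, and by
  transitivity all blocks have the same size n.  If a power of x stabilizes a block C other
  than B without being the identity, that power is again quasi-semiregular with fixed point w,
  so all of its orbits on the other points have one common length m > 1.  Both C and B - {w}
  are unions of such orbits, hence m divides both n and n - 1, which is absurd.  So B is the
  only block fixed by x, and every power of x stabilizing another block is the identity.
*)

theory Submission
  imports Defs "HOL-Combinatorics.Orbits" "HOL-Combinatorics.Cycles"
begin

lemma funpow_fixed: "f a = a \<Longrightarrow> (f ^^ k) a = a"
  by (induction k) simp_all

lemma funpow_periodic_bij_betw: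
  assumes "finite S" "bij_betw f S S" "y \<in> S"
  obtains n where "0 < n" "(f ^^ n) y = y"
proof -
  \<comment> \<open>extend f by the identity outside S to obtain a permutation in the library's sense\<close>
  define p where "p z = (if z \<in> S then f z else z)" for z
  have "bij_betw p S S"
    using assms(2) by (rule bij_betw_cong[THEN iffD1, rotated]) (simp add: p_def)
  then have "permutation p"
    by (intro permutes_imp_permutation[OF assms(1)] bij_imp_permutes) (auto simp: p_def)
  then obtain n where "0 < n" "(p ^^ n) y = y"
    by (rule permutation_self)
  moreover have "(p ^^ k) y = (f ^^ k) y" for k
  proof (induction k)
    case (Suc k)
    have "(f ^^ k) y \<in> S"
      using bij_betw_apply[OF bij_betw_funpow[OF assms(2)] assms(3)] .
    with Suc show ?case by (simp add: p_def)
  qed simp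
  ultimately show thesis using that by simp
qed

lemma card_orbit_eq_period:
  assumes "0 < m" and period: "\<And>j. (f ^^ j) s = s \<longleftrightarrow> m dvd j"
  shows "card (orbit f s) = m"
proof -
  have "orbit f s = (\<lambda>j. (f ^^ j) s) ` {..<m}"
    using orbit_altdef_bounded[OF period[of m, THEN iffD2] \<open>0 < m\<close>] by auto
  moreover have "inj_on (\<lambda>j. (f ^^ j) s) {..<m}"
  proof (rule linorder_inj_onI', rule notI)
    fix i j assume "i \<in> {..<m}" "j \<in> {..<m}" "i < j" "(f ^^ i) s = (f ^^ j) s"
    have "(f ^^ (m - j + i)) s = (f ^^ (m - j)) ((f ^^ i) s)"
      by (simp only: funpow_add comp_apply)
    also have "\<dots> = (f ^^ (m - j + j)) s"
      using \<open>(f ^^ i) s = (f ^^ j) s\<close> by (simp only: funpow_add comp_apply)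
    also have "\<dots> = s"
      using \<open>j \<in> {..<m}\<close> period[of m] by simp
    finally have "m dvd m - j + i"
      by (simp only: period)
    moreover have "0 < m - j + i" "m - j + i < m"
      using \<open>i < j\<close> \<open>j \<in> {..<m}\<close> by auto
    ultimately show False
      by (meson nat_dvd_not_less)
  qed
  ultimately show ?thesis
    by (simp add: card_image)
qed

lemma orbit_eq_if_self_in_orbit:
  assumes "s \<in> orbit f s" "u \<in> orbit f s"
  shows "orbit f u = orbit f s"
proof
  show "orbit f u \<subseteq> orbit f s"
    by (blast intro: orbit_trans[OF _ assms(2)])
  have "s \<in> orbit f u"
    using orbit_swap[OF assms] .
  then show "orbit f s \<subseteq> orbit f u"
    by (blast intro: orbit_trans)
qed

lemma period_dvd_card:
  assumes "finite S" "f ` S \<subseteq> S" "0 < m"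
    and period: "\<And>z j. z \<in> S \<Longrightarrow> (f ^^ j) z = z \<longleftrightarrow> m dvd j"
  shows "m dvd card S"
proof -
  have self_in_orbit: "z \<in> orbit f z" if "z \<in> S" for z
    using period[OF that, of m] \<open>0 < m\<close> by (auto simp: orbit_altdef intro!: exI[of _ m])
  have orbit_within: "orbit f z \<subseteq> S" if "z \<in> S" for z
  proof
    fix u assume "u \<in> orbit f z"
    then show "u \<in> S"
      by induction (use that assms(2) in auto)
  qed
  have orbit_eq: "orbit f u = orbit f y" if "y \<in> S" "u \<in> orbit f y" for y u
    using orbit_eq_if_self_in_orbit[OF self_in_orbit[OF that(1)] that(2)] .
  have S_eq: "S = \<Union> (orbit f ` S)"
    using self_in_orbit orbit_within by blast
  have "m dvd card (\<Union> (orbit f ` S))"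
  proof (rule dvd_partition)
    show "finite (\<Union> (orbit f ` S))"
      using S_eq assms(1) by simp
    show "\<forall>c\<in>orbit f ` S. m dvd card c"
      using card_orbit_eq_period[OF \<open>0 < m\<close> period] by simp
    show "\<forall>c1\<in>orbit f ` S. \<forall>c2\<in>orbit f ` S. c1 \<noteq> c2 \<longrightarrow> c1 \<inter> c2 = {}"
    proof (intro ballI impI)
      fix c1 c2 assume "c1 \<in> orbit f ` S" "c2 \<in> orbit f ` S" "c1 \<noteq> c2"
      then obtain y z where yz: "y \<in> S" "z \<in> S" and c: "c1 = orbit f y" "c2 = orbit f z"
        by blast
      show "c1 \<inter> c2 = {}"
      proof (rule equals0I)
        fix u assume "u \<in> c1 \<inter> c2"
        then have "c1 = c2"
          using orbit_eq[OF yz(1)] orbit_eq[OF yz(2)] unfolding c by (metis IntD1 IntD2)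
        with \<open>c1 \<noteq> c2\<close> show False ..
      qed
    qed
  qed
  then show ?thesis
    using S_eq by simp
qed

lemma quasi_semiregular_uniform_period:
  assumes qsr: "quasi_semiregular \<Omega> f" and "finite \<Omega>" and w: "w \<in> \<Omega>" "f w = w"
    and y: "y \<in> \<Omega> - {w}"
  obtains m where "1 < m" "\<And>z j. z \<in> \<Omega> - {w} \<Longrightarrow> (f ^^ j) z = z \<longleftrightarrow> m dvd j"
proof (rule that[of "least_power f y"])
  have bij: "bij_betw f \<Omega> \<Omega>" and unique: "\<exists>!w. w \<in> \<Omega> \<and> f w = w"
    and semireg: "\<forall>y\<in>\<Omega> - {w}. \<forall>k. (f ^^ k) y = y \<longrightarrow> (\<forall>z\<in>\<Omega>. (f ^^ k) z = z)"
    using qsr w unfolding quasi_semiregular_def by blast+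
  obtain n where n: "0 < n" "(f ^^ n) y = y"
    using funpow_periodic_bij_betw[OF \<open>finite \<Omega>\<close> bij] y by blast
  have least: "(f ^^ least_power f y) y = y" "0 < least_power f y"
    using least_powerI[OF n(2,1)] by blast+
  have "least_power f y \<noteq> 1"
  proof
    assume "least_power f y = 1"
    with least(1) have "f y = y"
      by simp
    with unique w y show False
      by blast
  qed
  with least(2) show "1 < least_power f y"
    by linarith
  show "(f ^^ j) z = z \<longleftrightarrow> least_power f y dvd j" if "z \<in> \<Omega> - {w}" for z j
  proof
    assume "(f ^^ j) z = z"
    then have "(f ^^ j) y = y"
      using semireg that y by blast
    then show "least_power f y dvd j"
      by (rule least_power_minimal)
  next
    assume "least_power f y dvd j"
    have "(f ^^ least_power f y) z = z"
      using semireg least(1) that y by blast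
    from funpow_mod_eq[OF this, of j] show "(f ^^ j) z = z"
      using \<open>least_power f y dvd j\<close> by simp
  qed
qed

lemma quasi_semiregular_invariant_card_neq:
  assumes qsr: "quasi_semiregular \<Omega> f" and "finite \<Omega>" and w: "w \<in> \<Omega>" "f w = w"
    and C: "C \<subseteq> \<Omega> - {w}" "f ` C \<subseteq> C"
    and D: "D \<subseteq> \<Omega>" "w \<in> D" "f ` D \<subseteq> D"
  shows "card C \<noteq> card D"
proof
  assume card_eq: "card C = card D"
  have "finite D"
    using D(1) \<open>finite \<Omega>\<close> by (rule finite_subset)
  then have "0 < card C"
    using card_eq D(2) by (auto simp: card_gt_0_iff)
  then obtain y where "y \<in> C"
    by (auto simp: card_gt_0_iff)
  then obtain m where "1 < m" and period: "\<And>z j. z \<in> \<Omega> - {w} \<Longrightarrow> (f ^^ j) z = z \<longleftrightarrow> m dvd j"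
    using quasi_semiregular_uniform_period[OF qsr \<open>finite \<Omega>\<close> w] C(1) by blast
  have "m dvd card C"
    using \<open>finite \<Omega>\<close> C \<open>1 < m\<close> period
    by (intro period_dvd_card) (auto intro: finite_subset)
  have "f ` (D - {w}) = f ` D - f ` {w}"
    using qsr D(1) w(1) unfolding quasi_semiregular_def
    by (intro inj_on_image_set_diff) (auto simp: bij_betw_def)
  then have "f ` (D - {w}) \<subseteq> D - {w}"
    using D(3) w(2) by auto
  then have "m dvd card (D - {w})"
    using \<open>finite D\<close> \<open>1 < m\<close> period D(1)
    by (intro period_dvd_card) auto
  moreover have "card (D - {w}) = card C - 1"
    using card_eq D(2) by simp
  ultimately have "m dvd card C - (card C - 1)"
    using \<open>m dvd card C\<close> by simp
  with \<open>0 < card C\<close> have "m dvd 1"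
    by simp
  with \<open>1 < m\<close> show False
    by simp
qed

lemma quasi_semiregular_funpow:
  assumes "quasi_semiregular \<Omega> f"
  shows "quasi_semiregular \<Omega> (f ^^ k) \<or> (\<forall>z\<in>\<Omega>. (f ^^ k) z = z)"
proof (rule disjCI)
  assume not_id: "\<not> (\<forall>z\<in>\<Omega>. (f ^^ k) z = z)"
  obtain w where w: "w \<in> \<Omega>" "f w = w"
    and bij: "bij_betw f \<Omega> \<Omega>"
    and semireg: "\<forall>y\<in>\<Omega> - {w}. \<forall>j. (f ^^ j) y = y \<longrightarrow> (\<forall>z\<in>\<Omega>. (f ^^ j) z = z)"
    using assms unfolding quasi_semiregular_def by blast
  have fixed: "(f ^^ k) w = w"
    using funpow_fixed[of f w k] w(2) by simp
  have unique: "v = w" if "v \<in> \<Omega>" "(f ^^ k) v = v" for v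
    using semireg that not_id by blast
  show "quasi_semiregular \<Omega> (f ^^ k)"
    unfolding quasi_semiregular_def
  proof (intro conjI)
    show "bij_betw (f ^^ k) \<Omega> \<Omega>"
      using bij by (rule bij_betw_funpow)
    show "\<exists>!v. v \<in> \<Omega> \<and> (f ^^ k) v = v"
      using w(1) fixed unique by blast
    show "\<forall>v\<in>\<Omega>. (f ^^ k) v = v \<longrightarrow>
        (\<forall>y\<in>\<Omega> - {v}. \<forall>j. ((f ^^ k) ^^ j) y = y \<longrightarrow> (\<forall>z\<in>\<Omega>. ((f ^^ k) ^^ j) z = z))"
      unfolding funpow_mult using semireg unique by blast
  qed
qed

lemma partition_on_part_eqI:
  assumes "partition_on \<Omega> \<Sigma>" "A \<in> \<Sigma>" "B \<in> \<Sigma>" "z \<in> A" "z \<in> B"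
  shows "A = B"
  using disjointD[OF partition_onD2[OF assms(1)] assms(2,3)] assms(4,5) by blast

lemma image_funpow:
  fixes f :: "'a \<Rightarrow> 'a"
  shows "(image f ^^ k) A = (f ^^ k) ` A"
  by (induction k) (simp_all add: image_comp)

lemma image_block_eq_if_fixpoint:
  assumes "partition_on \<Omega> \<Sigma>" "\<forall>B\<in>\<Sigma>. f ` B \<in> \<Sigma>" "B \<in> \<Sigma>" "w \<in> B" "f w = w"
  shows "f ` B = B"
proof (rule partition_on_part_eqI[OF assms(1)])
  show "f ` B \<in> \<Sigma>"
    using assms(2,3) by blast
  show "w \<in> f ` B"
    using assms(4,5) by (metis imageI)
qed (use assms(3,4) in auto)

lemma bij_betw_image_partition:
  assumes "partition_on \<Omega> \<Sigma>" "finite \<Omega>" "inj_on f \<Omega>" "\<forall>B\<in>\<Sigma>. f ` B \<in> \<Sigma>"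
  shows "bij_betw (image f) \<Sigma> \<Sigma>"
proof -
  have "inj_on (image f) \<Sigma>"
  proof (rule inj_onI)
    fix A B assume "A \<in> \<Sigma>" "B \<in> \<Sigma>" "f ` A = f ` B"
    moreover have "A \<subseteq> \<Omega>" "B \<subseteq> \<Omega>"
      using partition_onD1[OF assms(1)] \<open>A \<in> \<Sigma>\<close> \<open>B \<in> \<Sigma>\<close> by auto
    ultimately show "A = B"
      using inj_on_image_eq_iff[OF assms(3)] by blast
  qed
  moreover have "image f ` \<Sigma> = \<Sigma>"
    using endo_inj_surj[OF finite_elements[OF assms(2,1)]] assms(4) calculation by blast
  ultimately show ?thesis
    unfolding bij_betw_def ..
qed

lemma funpow_stabilizing_block_is_identity:
  assumes qsr: "quasi_semiregular \<Omega> x" and "finite \<Omega>" and w: "w \<in> \<Omega>" "x w = w"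
    and part: "partition_on \<Omega> \<Sigma>" and blocks: "\<forall>B\<in>\<Sigma>. x ` B \<in> \<Sigma>"
    and equal_card: "\<forall>A\<in>\<Sigma>. \<forall>B\<in>\<Sigma>. card A = card B"
    and C: "C \<in> \<Sigma>" "w \<notin> C" "(x ^^ k) ` C = C"
  shows "\<forall>z\<in>\<Omega>. (x ^^ k) z = z"
proof (rule ccontr)
  assume "\<not> ?thesis"
  then have qsr_k: "quasi_semiregular \<Omega> (x ^^ k)"
    using quasi_semiregular_funpow[OF qsr, of k] by blast
  obtain Bw where Bw: "Bw \<in> \<Sigma>" "w \<in> Bw"
    using partition_onD1[OF part] w(1) by blast
  have "x ` Bw = Bw"
    using image_block_eq_if_fixpoint[OF part blocks Bw w(2)] .
  then have "(image x ^^ k) Bw = Bw"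
    by (rule funpow_fixed)
  then have Bw_invariant: "(x ^^ k) ` Bw = Bw"
    by (simp only: image_funpow)
  have "card C \<noteq> card Bw"
  proof (rule quasi_semiregular_invariant_card_neq[OF qsr_k \<open>finite \<Omega>\<close> w(1) funpow_fixed[of x w k, OF w(2)]])
    show "C \<subseteq> \<Omega> - {w}"
      using partition_onD1[OF part] C(1,2) by blast
    show "Bw \<subseteq> \<Omega>"
      using partition_onD1[OF part] Bw(1) by blast
    show "(x ^^ k) ` C \<subseteq> C"
      using C(3) by (rule equalityD1)
    show "(x ^^ k) ` Bw \<subseteq> Bw"
      using Bw_invariant by (rule equalityD1)
  qed (rule Bw(2))
  then show False
    by (simp add: equal_card[rule_format, OF C(1) Bw(1)])
qed

lemma stable_block_contains_fixpoint:
  assumes qsr: "quasi_semiregular \<Omega> x" and "finite \<Omega>" and w: "w \<in> \<Omega>" "x w = w"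
    and part: "partition_on \<Omega> \<Sigma>" and blocks: "\<forall>B\<in>\<Sigma>. x ` B \<in> \<Sigma>"
    and equal_card: "\<forall>A\<in>\<Sigma>. \<forall>B\<in>\<Sigma>. card A = card B"
    and C: "C \<in> \<Sigma>" "x ` C = C"
  shows "w \<in> C"
proof (rule ccontr)
  assume "w \<notin> C"
  have "C \<noteq> {}"
    using partition_onD3[OF part] C(1) by auto
  then obtain c where "c \<in> C"
    by blast
  have "(x ^^ 1) ` C = C"
    using C(2) by simp
  then have "\<forall>z\<in>\<Omega>. (x ^^ 1) z = z"
    using funpow_stabilizing_block_is_identity[OF assms(1-7) C(1) \<open>w \<notin> C\<close>] by blast
  moreover have "c \<in> \<Omega>"
    using partition_onD1[OF part] C(1) \<open>c \<in> C\<close> by blast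
  ultimately have "x c = c"
    by simp
  moreover have "\<exists>!v. v \<in> \<Omega> \<and> x v = v"
    using qsr unfolding quasi_semiregular_def by blast
  ultimately have "c = w"
    using w \<open>c \<in> \<Omega>\<close> by blast
  with \<open>c \<in> C\<close> \<open>w \<notin> C\<close> show False
    by simp
qed

lemma quasi_semiregular_on_blocks:
  assumes qsr: "quasi_semiregular \<Omega> x" and fin: "finite \<Omega>"
    and part: "partition_on \<Omega> \<Sigma>" and blocks: "\<forall>B\<in>\<Sigma>. x ` B \<in> \<Sigma>"
    and equal_card: "\<forall>A\<in>\<Sigma>. \<forall>B\<in>\<Sigma>. card A = card B"
  shows "quasi_semiregular \<Sigma> (image x)"
proof -
  obtain w where w: "w \<in> \<Omega>" "x w = w" and bij: "bij_betw x \<Omega> \<Omega>"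
    using qsr unfolding quasi_semiregular_def by blast
  note identity_if_stabilizing = funpow_stabilizing_block_is_identity[OF qsr fin w part blocks equal_card]
  have block_subset: "B \<subseteq> \<Omega>" if "B \<in> \<Sigma>" for B
    using partition_onD1[OF part] that by blast
  obtain Bw where Bw: "Bw \<in> \<Sigma>" "w \<in> Bw"
    using partition_onD1[OF part] w(1) by blast
  have fixpoint_in_stable_block: "w \<in> C" if "C \<in> \<Sigma>" "x ` C = C" for C
    using stable_block_contains_fixpoint[OF qsr fin w part blocks equal_card that] .
  show ?thesis
    unfolding quasi_semiregular_def
  proof (intro conjI)
    show "bij_betw (image x) \<Sigma> \<Sigma>"
      using bij_betw_image_partition[OF part fin bij_betw_imp_inj_on[OF bij] blocks] .
    show "\<exists>!B. B \<in> \<Sigma> \<and> x ` B = B"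
    proof (rule ex1I[of _ Bw])
      show "Bw \<in> \<Sigma> \<and> x ` Bw = Bw"
        using Bw image_block_eq_if_fixpoint[OF part blocks Bw w(2)] by simp
      fix B assume "B \<in> \<Sigma> \<and> x ` B = B"
      then have "B \<in> \<Sigma>" "w \<in> B"
        using fixpoint_in_stable_block by auto
      then show "B = Bw"
        using partition_on_part_eqI[OF part _ Bw(1) _ Bw(2)] by blast
    qed
    show "\<forall>W\<in>\<Sigma>. x ` W = W \<longrightarrow>
        (\<forall>Y\<in>\<Sigma> - {W}. \<forall>k. (image x ^^ k) Y = Y \<longrightarrow> (\<forall>Z\<in>\<Sigma>. (image x ^^ k) Z = Z))"
    proof (intro ballI impI allI)
      fix W Y k Z
      assume W: "W \<in> \<Sigma>" "x ` W = W" and Y: "Y \<in> \<Sigma> - {W}" "(image x ^^ k) Y = Y" and "Z \<in> \<Sigma>"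
      have "w \<notin> Y"
      proof
        assume "w \<in> Y"
        then have "Y = W"
          using partition_on_part_eqI[OF part _ W(1) _ fixpoint_in_stable_block[OF W]] Y(1) by blast
        with Y(1) show False
          by simp
      qed
      moreover have "(x ^^ k) ` Y = Y"
        using Y(2) by (simp only: image_funpow)
      ultimately have "\<forall>z\<in>\<Omega>. (x ^^ k) z = z"
        using Y(1) by (intro identity_if_stabilizing) simp_all
      then have "(x ^^ k) ` Z = (\<lambda>z. z) ` Z"
        using block_subset[OF \<open>Z \<in> \<Sigma>\<close>] by (intro image_cong) auto
      then show "(image x ^^ k) Z = Z"
        by (simp add: image_funpow)
    qed
  qed
qed

lemma finite_if_transitive:
  assumes "finite G" "\<forall>a\<in>\<Omega>. \<forall>b\<in>\<Omega>. \<exists>g\<in>G. g a = b"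
  shows "finite \<Omega>"
proof (cases "\<Omega> = {}")
  case False
  then obtain a where "a \<in> \<Omega>"
    by blast
  have "\<Omega> \<subseteq> (\<lambda>g. g a) ` G"
  proof
    fix b assume "b \<in> \<Omega>"
    then obtain g where "g \<in> G" "g a = b"
      using assms(2) \<open>a \<in> \<Omega>\<close> by blast
    then show "b \<in> (\<lambda>g. g a) ` G"
      by blast
  qed
  with assms(1) show ?thesis
    by (rule finite_surj)
qed simp

lemma transitive_block_system_card_eq:
  assumes sys: "block_system \<Omega> G \<Sigma>" and inj: "\<forall>g\<in>G. inj_on g \<Omega>"
    and trans: "\<forall>a\<in>\<Omega>. \<forall>b\<in>\<Omega>. \<exists>g\<in>G. g a = b" and "A \<in> \<Sigma>" "B \<in> \<Sigma>"
  shows "card A = card B"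
proof -
  have part: "partition_on \<Omega> \<Sigma>" and blocks: "\<forall>g\<in>G. \<forall>B\<in>\<Sigma>. g ` B \<in> \<Sigma>"
    using sys unfolding block_system_def by blast+
  have "A \<noteq> {}" "B \<noteq> {}"
    using partition_onD3[OF part] \<open>A \<in> \<Sigma>\<close> \<open>B \<in> \<Sigma>\<close> by auto
  then obtain a b where "a \<in> A" "b \<in> B"
    by blast
  moreover have "A \<subseteq> \<Omega>" "B \<subseteq> \<Omega>"
    using partition_onD1[OF part] \<open>A \<in> \<Sigma>\<close> \<open>B \<in> \<Sigma>\<close> by blast+
  ultimately obtain g where g: "g \<in> G" "g a = b"
    using trans by blast
  have "b \<in> g ` A"
    using \<open>a \<in> A\<close> unfolding g(2)[symmetric] by (rule imageI)
  then have "g ` A = B"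
    by (rule partition_on_part_eqI[OF part blocks[rule_format, OF g(1) \<open>A \<in> \<Sigma>\<close>] \<open>B \<in> \<Sigma>\<close> _ \<open>b \<in> B\<close>])
  moreover have "inj_on g A"
    using inj g(1) \<open>A \<subseteq> \<Omega>\<close> inj_on_subset by blast
  ultimately show ?thesis
    using card_image by metis
qed

theorem lemma2p1:
  fixes \<Omega> :: "'a set" and G :: "('a \<Rightarrow> 'a) set" and x :: "'a \<Rightarrow> 'a"
    and \<Sigma> :: "'a set set"
  assumes "subgroup G (BijGroup \<Omega>)"
    and "finite G"
    and "\<forall>a\<in>\<Omega>. \<forall>b\<in>\<Omega>. \<exists>g\<in>G. g a = b"
    and "x \<in> G"
    and "quasi_semiregular \<Omega> x"
    and "block_system \<Omega> G \<Sigma>"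
  shows "quasi_semiregular \<Sigma> (\<lambda>B. x ` B)"
proof -
  have inj: "\<forall>g\<in>G. inj_on g \<Omega>"
    using subgroup.subset[OF assms(1)] by (auto simp: BijGroup_def Bij_def bij_betw_def)
  have part: "partition_on \<Omega> \<Sigma>" and blocks: "\<forall>B\<in>\<Sigma>. x ` B \<in> \<Sigma>"
    using assms(4,6) unfolding block_system_def by auto
  show ?thesis
  proof (rule quasi_semiregular_on_blocks[OF assms(5) finite_if_transitive[OF assms(2,3)] part blocks])
    show "\<forall>A\<in>\<Sigma>. \<forall>B\<in>\<Sigma>. card A = card B"
      using transitive_block_system_card_eq[OF assms(6) inj assms(3)] by blast
  qed
qed

end
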